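(* Let $m\geq 13$ and $n\geq 13$ be integers. If $f$ is a signed Roman dominating function of minimum weight on $C_m\vee C_n$ such that $\sum_{y\in N_{C_m}[x]}f(y)<0$ for some $x\in V(C_m)$, then $\gamma_{sR}(C_m\vee C_n)\geq 3$.
   Context: $C_n$ denotes the cycle on $n$ vertices; in $C_m\vee C_n$ the vertex sets $V(C_m)$ and $V(C_n)$ are disjoint. For a graph $G=(V,E)$ and $x\in V$, $N_G[x]=\{x\}\cup\{y: xy\in E\}$ is the closed neighborhood (so $N_{C_m}[x]$ consists of $x$ and its two neighbors on the cycle $C_m$). A signed Roman dominating function (SRDF) on $G$ is a function $f:V\to\{-1,1,2\}$ such that (a) $\sum_{y\in N_G[x]}f(y)\geq 1$ for every $x\in V$, and (b) every vertex $x$ with $f(x)=-1$ is adjacent to at least one vertex $y$ with $f(y)=2$. The weight of $f$ is $\sum_{x\in V}f(x)$, and $\gamma_{sR}(G)$ is the minimum weight of an SRDF on $G$. The join $G_1\vee G_2$ of two graphs has vertex set $V(G_1)\cup V(G_2)$ (disjoint union) and edge set $E(G_1)\cup E(G_2)\cup\{uv: u\in V(G_1), v\in V(G_2)\}$. *)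

theory Defs
  imports Main
begin

text \<open>A (simple) graph is given by a vertex set V and a symmetric irreflexive
adjacency relation adj.\<close>

definition closed_nbhd :: "'a set \<Rightarrow> ('a \<Rightarrow> 'a \<Rightarrow> bool) \<Rightarrow> 'a \<Rightarrow> 'a set" where
  "closed_nbhd V adj x = {x} \<union> {y \<in> V. adj x y}"

definition is_srdf :: "'a set \<Rightarrow> ('a \<Rightarrow> 'a \<Rightarrow> bool) \<Rightarrow> ('a \<Rightarrow> int) \<Rightarrow> bool" where
  "is_srdf V adj f \<longleftrightarrow>
     (\<forall>x\<in>V. f x \<in> {-1, 1, 2}) \<and>
     (\<forall>x\<in>V. (\<Sum>y\<in>closed_nbhd V adj x. f y) \<ge> 1) \<and>
     (\<forall>x\<in>V. f x = -1 \<longrightarrow> (\<exists>y\<in>V. adj x y \<and> f y = 2))"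

definition weight :: "'a set \<Rightarrow> ('a \<Rightarrow> int) \<Rightarrow> int" where
  "weight V f = (\<Sum>x\<in>V. f x)"

definition gamma_sR :: "'a set \<Rightarrow> ('a \<Rightarrow> 'a \<Rightarrow> bool) \<Rightarrow> int" where
  "gamma_sR V adj = Min {weight V f | f. is_srdf V adj f}"

definition cycle_adj :: "nat \<Rightarrow> nat \<Rightarrow> nat \<Rightarrow> bool" where
  "cycle_adj m i j \<longleftrightarrow> i < m \<and> j < m \<and> (j = (i + 1) mod m \<or> i = (j + 1) mod m)"

definition join_V :: "nat \<Rightarrow> nat \<Rightarrow> (nat + nat) set" where
  "join_V m n = Inl ` {..<m} \<union> Inr ` {..<n}"

fun join_adj :: "nat \<Rightarrow> nat \<Rightarrow> nat + nat \<Rightarrow> nat + nat \<Rightarrow> bool" where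
  "join_adj m n (Inl i) (Inl j) = cycle_adj m i j"
| "join_adj m n (Inr i) (Inr j) = cycle_adj n i j"
| "join_adj m n (Inl i) (Inr j) = (i < m \<and> j < n)"
| "join_adj m n (Inr j) (Inl i) = (i < m \<and> j < n)"

end

theory Submission
  imports Defs
begin

text \<open>Write \<open>A\<close> and \<open>B\<close> for the total weight of \<open>f\<close> on \<open>C\<^sub>m\<close> and on \<open>C\<^sub>n\<close>. The closed
neighbourhood of a vertex of \<open>C\<^sub>m\<close> in the join is its cycle neighbourhood together with all of
\<open>C\<^sub>n\<close>, so a vertex of \<open>C\<^sub>m\<close> with negative cycle-neighbourhood sum forces \<open>B \<ge> 2\<close>. If \<open>A \<ge> 1\<close>
the weight \<open>A + B\<close> is at least 3. Otherwise every cycle-neighbourhood sum on \<open>C\<^sub>n\<close> is at least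
\<open>1 - A\<close>; since \<open>C\<^sub>n\<close> is 2-regular these \<open>n\<close> sums add up to \<open>3B\<close>, so \<open>3B \<ge> n(1 - A)\<close>, which for
\<open>n \<ge> 9\<close> and \<open>A \<le> 0\<close> again gives \<open>A + B \<ge> 3\<close>.\<close>

lemma sum_closed_nbhd_sums:
  fixes g :: "'a \<Rightarrow> 'b::comm_semiring_1"
  assumes "finite V" and "\<And>x y. adj x y \<longleftrightarrow> adj y x"
  shows "(\<Sum>x\<in>V. \<Sum>y\<in>closed_nbhd V adj x. g y)
       = (\<Sum>y\<in>V. of_nat (card (closed_nbhd V adj y)) * g y)"
proof -
  have nbhd: "closed_nbhd V adj x = {y\<in>V. x = y \<or> adj x y}" if "x \<in> V" for x
    using that unfolding closed_nbhd_def by auto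
  have "(\<Sum>x\<in>V. \<Sum>y\<in>closed_nbhd V adj x. g y)
      = (\<Sum>x\<in>V. \<Sum>y\<in>{y\<in>V. x = y \<or> adj x y}. g y)"
    by (rule sum.cong) (simp_all add: nbhd)
  also have "\<dots> = (\<Sum>y\<in>V. \<Sum>x\<in>{x\<in>V. x = y \<or> adj x y}. g y)"
    by (rule sum.swap_restrict) (use assms(1) in auto)
  also have "\<dots> = (\<Sum>y\<in>V. of_nat (card (closed_nbhd V adj y)) * g y)"
    by (rule sum.cong) (auto simp: nbhd assms(2) eq_commute)
  finally show ?thesis .
qed

lemma cycle_closed_nbhd:
  assumes "n \<ge> 3" and "y < n"
  shows "closed_nbhd {..<n} (cycle_adj n) y = {y, (y + 1) mod n, (y + n - 1) mod n}"
proof -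
  have "cycle_adj n y z \<longleftrightarrow> z = (y + 1) mod n \<or> z = (y + n - 1) mod n" if "z < n" for z
    using that assms unfolding cycle_adj_def by (auto simp: mod_if)
  then show ?thesis
    using assms unfolding closed_nbhd_def by auto
qed

lemma card_cycle_closed_nbhd:
  assumes "n \<ge> 3" and "y < n"
  shows "card (closed_nbhd {..<n} (cycle_adj n) y) = 3"
  using assms by (auto simp: cycle_closed_nbhd mod_if)

lemma cycle_sum_closed_nbhd_sums:
  fixes g :: "nat \<Rightarrow> 'b::comm_semiring_1"
  assumes "n \<ge> 3"
  shows "(\<Sum>y<n. \<Sum>z\<in>closed_nbhd {..<n} (cycle_adj n) y. g z) = 3 * (\<Sum>y<n. g y)"
proof -
  have "cycle_adj n x y \<longleftrightarrow> cycle_adj n y x" for x y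
    unfolding cycle_adj_def by auto
  then have "(\<Sum>y<n. \<Sum>z\<in>closed_nbhd {..<n} (cycle_adj n) y. g z)
      = (\<Sum>y<n. of_nat (card (closed_nbhd {..<n} (cycle_adj n) y)) * g y)"
    by (intro sum_closed_nbhd_sums) auto
  also have "\<dots> = 3 * (\<Sum>y<n. g y)"
    using assms by (simp add: card_cycle_closed_nbhd sum_distrib_left)
  finally show ?thesis .
qed

lemma join_closed_nbhd_Inl:
  assumes "x < m"
  shows "closed_nbhd (join_V m n) (join_adj m n) (Inl x)
       = Inl ` closed_nbhd {..<m} (cycle_adj m) x \<union> Inr ` {..<n}"
  using assms unfolding closed_nbhd_def join_V_def by (auto simp: cycle_adj_def)

lemma join_closed_nbhd_Inr:
  assumes "y < n"
  shows "closed_nbhd (join_V m n) (join_adj m n) (Inr y)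
       = Inr ` closed_nbhd {..<n} (cycle_adj n) y \<union> Inl ` {..<m}"
  using assms unfolding closed_nbhd_def join_V_def by (auto simp: cycle_adj_def)

lemma finite_cycle_closed_nbhd: "finite (closed_nbhd {..<n} (cycle_adj n) y)"
  unfolding closed_nbhd_def by auto

lemma sum_join_closed_nbhd_Inl:
  assumes "x < m"
  shows "(\<Sum>z\<in>closed_nbhd (join_V m n) (join_adj m n) (Inl x). f z)
       = (\<Sum>y\<in>closed_nbhd {..<m} (cycle_adj m) x. f (Inl y)) + (\<Sum>y<n. f (Inr y))"
  unfolding join_closed_nbhd_Inl[OF assms]
  by (subst sum.union_disjoint) (auto simp: finite_cycle_closed_nbhd sum.reindex)

lemma sum_join_closed_nbhd_Inr:
  assumes "y < n"
  shows "(\<Sum>z\<in>closed_nbhd (join_V m n) (join_adj m n) (Inr y). f z)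
       = (\<Sum>x\<in>closed_nbhd {..<n} (cycle_adj n) y. f (Inr x)) + (\<Sum>x<m. f (Inl x))"
  unfolding join_closed_nbhd_Inr[OF assms]
  by (subst sum.union_disjoint) (auto simp: finite_cycle_closed_nbhd sum.reindex)

lemma weight_join: "weight (join_V m n) f = (\<Sum>x<m. f (Inl x)) + (\<Sum>y<n. f (Inr y))"
  unfolding weight_def join_V_def
  by (subst sum.union_disjoint) (auto simp: sum.reindex)

lemma srdf_closed_nbhd_sum_ge_1:
  "is_srdf V adj f \<Longrightarrow> x \<in> V \<Longrightarrow> (\<Sum>y\<in>closed_nbhd V adj x. f y) \<ge> 1"
  unfolding is_srdf_def by blast

lemma join_cycle_srdf_weight_ge_3:
  assumes "n \<ge> 9" and srdf: "is_srdf (join_V m n) (join_adj m n) f"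
    and "x < m" and neg: "(\<Sum>y\<in>closed_nbhd {..<m} (cycle_adj m) x. f (Inl y)) < 0"
  shows "weight (join_V m n) f \<ge> 3"
proof -
  define A where "A = (\<Sum>x<m. f (Inl x))"
  define B where "B = (\<Sum>y<n. f (Inr y))"
  have "1 \<le> (\<Sum>z\<in>closed_nbhd (join_V m n) (join_adj m n) (Inl x). f z)"
    using srdf \<open>x < m\<close> by (intro srdf_closed_nbhd_sum_ge_1) (auto simp: join_V_def)
  with neg have B: "B \<ge> 2"
    unfolding sum_join_closed_nbhd_Inl[OF \<open>x < m\<close>] B_def by linarith
  have "A + B \<ge> 3"
  proof (cases "A \<ge> 1")
    case True
    with B show ?thesis by simp
  next
    case False
    then have "A \<le> 0" by simp
    have "1 - A \<le> (\<Sum>z\<in>closed_nbhd {..<n} (cycle_adj n) y. f (Inr z))" if "y < n" for y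
    proof -
      have "1 \<le> (\<Sum>z\<in>closed_nbhd (join_V m n) (join_adj m n) (Inr y). f z)"
        using srdf \<open>y < n\<close> by (intro srdf_closed_nbhd_sum_ge_1) (auto simp: join_V_def)
      then show ?thesis
        unfolding sum_join_closed_nbhd_Inr[OF \<open>y < n\<close>] A_def by linarith
    qed
    then have nbhd_sums:
      "(\<Sum>y<n. 1 - A) \<le> (\<Sum>y<n. \<Sum>z\<in>closed_nbhd {..<n} (cycle_adj n) y. f (Inr z))"
      by (intro sum_mono) simp
    have "9 * (1 - A) \<le> int n * (1 - A)"
      using \<open>A \<le> 0\<close> \<open>n \<ge> 9\<close> by (intro mult_right_mono) auto
    also have "\<dots> \<le> (\<Sum>y<n. \<Sum>z\<in>closed_nbhd {..<n} (cycle_adj n) y. f (Inr z))"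
      using nbhd_sums by simp
    also have "\<dots> = 3 * B"
      unfolding B_def using \<open>n \<ge> 9\<close> by (intro cycle_sum_closed_nbhd_sums) simp
    finally have "9 * (1 - A) \<le> 3 * B" .
    with \<open>A \<le> 0\<close> show ?thesis by arith
  qed
  then show ?thesis
    unfolding weight_join A_def B_def .
qed

theorem mainTheorem7:
  fixes m n :: nat and f :: "nat + nat \<Rightarrow> int"
  assumes "m \<ge> 13" and "n \<ge> 13"
    and "is_srdf (join_V m n) (join_adj m n) f"
    and "weight (join_V m n) f = gamma_sR (join_V m n) (join_adj m n)"
    and "\<exists>x<m. (\<Sum>y\<in>closed_nbhd {..<m} (cycle_adj m) x. f (Inl y)) < 0"
  shows "gamma_sR (join_V m n) (join_adj m n) \<ge> 3"
proof -
  obtain x where "x < m" "(\<Sum>y\<in>closed_nbhd {..<m} (cycle_adj m) x. f (Inl y)) < 0"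
    using assms(5) by blast
  with assms(2,3) have "weight (join_V m n) f \<ge> 3"
    by (intro join_cycle_srdf_weight_ge_3) auto
  with assms(4) show ?thesis by simp
qed

end
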